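(* There is an absolute constant $C>0$ (independent of $n$, $f$, $g$, $x$) such that for all real-valued $f,g\in C^{3}[0,1]$, all $x\in[0,1]$ and $n\in\mathbb{N}$, $$n\left|B_{n}(fg)(x)-B_{n}(f)(x)B_{n}(g)(x)-\frac{x(1-x)}{n}f'(x)g'(x)\right|\le C\,x(1-x)\frac{1}{\sqrt{n}}\max\{\|f\|,\|f'''\|\}\cdot\max\{\|g\|,\|g'''\|\}.$$
   Context: For $f:[0,1]\to\mathbb{R}$ the Bernstein polynomials are $B_{n}(f)(x)=\sum_{k=0}^{n}\binom{n}{k}x^{k}(1-x)^{n-k}f(k/n)$. $\|\cdot\|$ denotes the uniform norm on $C[0,1]$. *)

theory Defs
  imports "HOL-Analysis.Analysis"
begin

definition bernstein :: "nat \<Rightarrow> (real \<Rightarrow> real) \<Rightarrow> real \<Rightarrow> real" where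
  "bernstein n f x = (\<Sum>k\<le>n. real (n choose k) * x ^ k * (1 - x) ^ (n - k) * f (real k / real n))"

definition sup_norm01 :: "(real \<Rightarrow> real) \<Rightarrow> real" where
  "sup_norm01 f = (SUP t\<in>{0..1}. \<bar>f t\<bar>)"

text \<open>f is in C^3[0,1] with derivatives f1 = f', f2 = f'', f3 = f''' (one-sided at endpoints).\<close>
definition C3_01 :: "(real \<Rightarrow> real) \<Rightarrow> (real \<Rightarrow> real) \<Rightarrow> (real \<Rightarrow> real) \<Rightarrow> (real \<Rightarrow> real) \<Rightarrow> bool" where
  "C3_01 f f1 f2 f3 \<longleftrightarrow>
     (\<forall>t\<in>{0..1}. (f has_real_derivative f1 t) (at t within {0..1})
                \<and> (f1 has_real_derivative f2 t) (at t within {0..1})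
                \<and> (f2 has_real_derivative f3 t) (at t within {0..1}))
     \<and> continuous_on {0..1} f3"

end

theory Submission
  imports Defs
begin

text \<open>
  Write B_n h(x) = E h(K/n) with K binomially distributed with parameters n and x, put
  Y = K/n - x and v = x(1 - x), and expand f(K/n) = f(x) + f'(x) Y + R_f. Taylor's theorem gives
  |R_f| <= c M_f Y^2 with M_f = max(||f||, ||f'''||), once f' and f'' are bounded by multiples of
  M_f through Taylor expansions at distances 1/4 and 1/2. Since E Y = 0 and E Y^2 = v/n, the
  covariance B_n(fg) - B_n f B_n g equals f'(x) g'(x) v/n plus
  f'(x) E(Y R_g) + g'(x) E(Y R_f) + E(R_f R_g) - E R_f E R_g. These terms are controlled by
  E Y^4 = (3 n^2 v^2 + n v (1 - 6v)) / n^4 <= 2v / n^2 (using v <= 1/4) and, via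
  |Y|^3 <= Y^2 / (2 sqrt n) + sqrt n Y^4 / 2, by E|Y|^3 <= 2v n^(-3/2).
\<close>

definition binomial_expectation :: "real \<Rightarrow> nat \<Rightarrow> (nat \<Rightarrow> real) \<Rightarrow> real" where
  "binomial_expectation x n p = (\<Sum>k\<le>n. real (n choose k) * x ^ k * (1 - x) ^ (n - k) * p k)"

lemma bernstein_eq_binomial_expectation:
  "bernstein n f x = binomial_expectation x n (\<lambda>k. f (real k / real n))"
  by (simp add: bernstein_def binomial_expectation_def)

lemma binomial_expectation_const [simp]: "binomial_expectation x n (\<lambda>k. c) = c"
  using binomial_ring[of x "1 - x" n]
  by (simp add: binomial_expectation_def flip: sum_distrib_right)

lemma binomial_expectation_add [simp]:
  "binomial_expectation x n (\<lambda>k. p k + q k) = binomial_expectation x n p + binomial_expectation x n q"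
  by (simp add: binomial_expectation_def sum.distrib algebra_simps)

lemma binomial_expectation_diff [simp]:
  "binomial_expectation x n (\<lambda>k. p k - q k) = binomial_expectation x n p - binomial_expectation x n q"
  by (simp add: binomial_expectation_def sum_subtractf algebra_simps)

lemma binomial_expectation_cmult [simp]:
  "binomial_expectation x n (\<lambda>k. c * p k) = c * binomial_expectation x n p"
  by (simp add: binomial_expectation_def sum_distrib_left algebra_simps)

lemma binomial_expectation_minus [simp]:
  "binomial_expectation x n (\<lambda>k. - p k) = - binomial_expectation x n p"
  by (simp add: binomial_expectation_def sum_negf)

lemma binomial_expectation_divide [simp]:
  "binomial_expectation x n (\<lambda>k. p k / c) = binomial_expectation x n p / c"
  by (simp add: binomial_expectation_def sum_divide_distrib)

lemmas binomial_expectation_linear =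
  binomial_expectation_const binomial_expectation_add binomial_expectation_diff binomial_expectation_cmult

lemma binomial_expectation_mono:
  assumes "x \<in> {0..1}" and "\<And>k. k \<le> n \<Longrightarrow> p k \<le> q k"
  shows "binomial_expectation x n p \<le> binomial_expectation x n q"
  unfolding binomial_expectation_def using assms by (intro sum_mono mult_left_mono) auto

lemma binomial_expectation_nonneg:
  assumes "x \<in> {0..1}" and "\<And>k. k \<le> n \<Longrightarrow> 0 \<le> p k"
  shows "0 \<le> binomial_expectation x n p"
  using binomial_expectation_mono[of x n "\<lambda>_. 0" p] assms by simp

lemma binomial_expectation_abs_le:
  assumes "x \<in> {0..1}" and "\<And>k. k \<le> n \<Longrightarrow> \<bar>p k\<bar> \<le> q k"
  shows "\<bar>binomial_expectation x n p\<bar> \<le> binomial_expectation x n q"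
proof -
  have "binomial_expectation x n p \<le> binomial_expectation x n q"
    using assms by (intro binomial_expectation_mono) (auto simp: abs_le_iff)
  moreover have "binomial_expectation x n (\<lambda>k. - q k) \<le> binomial_expectation x n p"
    using assms(2) by (intro binomial_expectation_mono[OF assms(1)]) (meson abs_le_D2 minus_le_iff)
  ultimately show ?thesis by (simp add: abs_le_iff)
qed

lemma binomial_expectation_Suc_times:
  "binomial_expectation x (Suc m) (\<lambda>k. real k * p k)
     = real (Suc m) * x * binomial_expectation x m (\<lambda>k. p (Suc k))"
proof -
  have summand: "real (Suc m choose Suc j) * x ^ Suc j * (1 - x) ^ (Suc m - Suc j) * (real (Suc j) * p (Suc j))
      = real (Suc m) * x * (real (m choose j) * x ^ j * (1 - x) ^ (m - j) * p (Suc j))" for j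
  proof -
    have binom: "real (Suc m choose Suc j) * real (Suc j) = real (Suc m) * real (m choose j)"
      by (metis Suc_times_binomial of_nat_mult mult.commute)
    have "real (Suc m choose Suc j) * x ^ Suc j * (1 - x) ^ (Suc m - Suc j) * (real (Suc j) * p (Suc j))
        = (real (Suc m choose Suc j) * real (Suc j)) * (x * (x ^ j * ((1 - x) ^ (m - j) * p (Suc j))))"
      by (simp only: power_Suc diff_Suc_Suc mult_ac)
    then show ?thesis
      unfolding binom by (simp only: mult_ac)
  qed
  have "binomial_expectation x (Suc m) (\<lambda>k. real k * p k) = (\<Sum>j\<le>m.
      real (Suc m choose Suc j) * x ^ Suc j * (1 - x) ^ (Suc m - Suc j) * (real (Suc j) * p (Suc j)))"
    unfolding binomial_expectation_def sum.atMost_Suc_shift by simp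
  also have "\<dots> = real (Suc m) * x * binomial_expectation x m (\<lambda>k. p (Suc k))"
    unfolding summand binomial_expectation_def sum_distrib_left ..
  finally show ?thesis .
qed

lemma binomial_expectation_id:
  "binomial_expectation x m real = real m * x"
proof (cases m)
  case (Suc m')
  then show ?thesis
    using binomial_expectation_Suc_times[of x m' "\<lambda>_. 1"] by simp
qed (simp add: binomial_expectation_def)

lemma binomial_expectation_power2:
  "binomial_expectation x m (\<lambda>k. real k ^ 2) = real m * (real m - 1) * x ^ 2 + real m * x"
proof (cases m)
  case (Suc m')
  have "binomial_expectation x m (\<lambda>k. real k ^ 2) = real m * x * binomial_expectation x m' (\<lambda>k. real k + 1)"
    using Suc binomial_expectation_Suc_times[of x m' real] by (simp add: power2_eq_square)
  then show ?thesis
    unfolding binomial_expectation_linear binomial_expectation_id Suc of_nat_Suc by algebra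
qed (simp add: binomial_expectation_def)

lemma binomial_expectation_power3:
  "binomial_expectation x m (\<lambda>k. real k ^ 3)
     = real m * (real m - 1) * (real m - 2) * x ^ 3 + 3 * real m * (real m - 1) * x ^ 2 + real m * x"
proof (cases m)
  case (Suc m')
  have "binomial_expectation x m (\<lambda>k. real k ^ 3)
      = real m * x * binomial_expectation x m' (\<lambda>k. real k ^ 2 + 2 * real k + 1)"
    using Suc binomial_expectation_Suc_times[of x m' "\<lambda>k. real k ^ 2"]
    by (simp add: power2_eq_square power3_eq_cube algebra_simps)
  then show ?thesis
    unfolding binomial_expectation_linear binomial_expectation_id binomial_expectation_power2 Suc of_nat_Suc
    by algebra
qed (simp add: binomial_expectation_def)

lemma binomial_expectation_power4:
  "binomial_expectation x m (\<lambda>k. real k ^ 4)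
     = real m * (real m - 1) * (real m - 2) * (real m - 3) * x ^ 4
       + 6 * real m * (real m - 1) * (real m - 2) * x ^ 3 + 7 * real m * (real m - 1) * x ^ 2 + real m * x"
proof (cases m)
  case (Suc m')
  have "binomial_expectation x m (\<lambda>k. real k ^ 4)
      = real m * x * binomial_expectation x m' (\<lambda>k. real k ^ 3 + 3 * real k ^ 2 + 3 * real k + 1)"
    using Suc binomial_expectation_Suc_times[of x m' "\<lambda>k. real k ^ 3"]
    by (simp add: power2_eq_square power3_eq_cube power4_eq_xxxx algebra_simps)
  then show ?thesis
    unfolding binomial_expectation_linear binomial_expectation_id binomial_expectation_power2
      binomial_expectation_power3 Suc of_nat_Suc
    by algebra
qed (simp add: binomial_expectation_def)

lemma binomial_expectation_central_power2:
  "binomial_expectation x m (\<lambda>k. (real k - real m * x) ^ 2) = real m * (x * (1 - x))"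
proof -
  have "binomial_expectation x m (\<lambda>k. (real k - real m * x) ^ 2)
      = binomial_expectation x m (\<lambda>k. real k ^ 2 - 2 * (real m * x) * real k + (real m * x) ^ 2)"
    by (simp add: power2_eq_square algebra_simps)
  then show ?thesis
    unfolding binomial_expectation_linear binomial_expectation_id binomial_expectation_power2 by algebra
qed

lemma binomial_expectation_central_power4:
  "binomial_expectation x m (\<lambda>k. (real k - real m * x) ^ 4)
     = 3 * real m ^ 2 * (x * (1 - x)) ^ 2 + real m * (x * (1 - x)) * (1 - 6 * (x * (1 - x)))"
proof -
  let ?\<mu> = "real m * x"
  have "binomial_expectation x m (\<lambda>k. (real k - ?\<mu>) ^ 4)
      = binomial_expectation x m (\<lambda>k. real k ^ 4 - 4 * ?\<mu> * real k ^ 3 + 6 * ?\<mu> ^ 2 * real k ^ 2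
           - 4 * ?\<mu> ^ 3 * real k + ?\<mu> ^ 4)"
    by (simp add: power2_eq_square power3_eq_cube power4_eq_xxxx algebra_simps)
  also have "\<dots> = 3 * real m ^ 2 * (x * (1 - x)) ^ 2 + real m * (x * (1 - x)) * (1 - 6 * (x * (1 - x)))"
    unfolding binomial_expectation_linear binomial_expectation_id binomial_expectation_power2
      binomial_expectation_power3 binomial_expectation_power4
    by algebra
  finally show ?thesis .
qed

lemma variance_factor_bounds:
  fixes x :: real
  assumes "x \<in> {0..1}"
  shows "0 \<le> x * (1 - x)" "x * (1 - x) \<le> 1 / 4"
proof -
  show "0 \<le> x * (1 - x)" using assms by simp
  have "x * (1 - x) = 1 / 4 - (x - 1 / 2) ^ 2" by (simp add: power2_eq_square algebra_simps)
  then show "x * (1 - x) \<le> 1 / 4" by simp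
qed

lemma binomial_expectation_deviation:
  assumes "n \<ge> 1"
  shows "binomial_expectation x n (\<lambda>k. real k / real n - x) = 0"
  using assms by (simp add: binomial_expectation_id)

lemma binomial_expectation_deviation_power2:
  assumes "n \<ge> 1"
  shows "binomial_expectation x n (\<lambda>k. (real k / real n - x) ^ 2) = x * (1 - x) / real n"
proof -
  have "(real k / real n - x) ^ 2 = (real k - real n * x) ^ 2 / real n ^ 2" for k
    using assms by (simp add: field_simps)
  then have "binomial_expectation x n (\<lambda>k. (real k / real n - x) ^ 2)
      = binomial_expectation x n (\<lambda>k. (real k - real n * x) ^ 2) / real n ^ 2"
    by simp
  also have "\<dots> = x * (1 - x) / real n"
    unfolding binomial_expectation_central_power2 using assms by (simp add: power2_eq_square)
  finally show ?thesis .
qed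

lemma binomial_expectation_deviation_power4_le:
  assumes "x \<in> {0..1}" and "n \<ge> 1"
  shows "real n ^ 2 * binomial_expectation x n (\<lambda>k. (real k / real n - x) ^ 4) \<le> 2 * (x * (1 - x))"
proof -
  define v where "v = x * (1 - x)"
  have v: "0 \<le> v" "v \<le> 1 / 4"
    using variance_factor_bounds[OF assms(1)] unfolding v_def by auto
  have "(real k / real n - x) ^ 4 = (real k - real n * x) ^ 4 / real n ^ 4" for k
    using assms by (simp add: field_simps)
  then have "real n ^ 2 * binomial_expectation x n (\<lambda>k. (real k / real n - x) ^ 4)
      = real n ^ 2 * binomial_expectation x n (\<lambda>k. (real k - real n * x) ^ 4) / real n ^ 4"
    by simp
  also have "\<dots> = 3 * v ^ 2 + v * (1 - 6 * v) / real n"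
    unfolding binomial_expectation_central_power4 v_def using assms(2)
    by (simp add: field_simps power2_eq_square power4_eq_xxxx)
  also have "\<dots> \<le> 3 * v / 4 + v"
  proof (rule add_mono)
    have "v * v \<le> v * (1 / 4)" using v by (intro mult_left_mono) auto
    then show "3 * v ^ 2 \<le> 3 * v / 4" by (simp add: power2_eq_square)
    have "v * (1 - 6 * v) \<le> v * real n" using v assms(2) by (intro mult_left_mono) auto
    then show "v * (1 - 6 * v) / real n \<le> v" using assms(2) by (simp add: divide_le_eq mult.commute)
  qed
  also have "\<dots> \<le> 2 * v"
    using v by simp
  finally show ?thesis unfolding v_def .
qed

lemma binomial_expectation_deviation_power4_bound:
  assumes "x \<in> {0..1}" and "n \<ge> 1"
  shows "real n * binomial_expectation x n (\<lambda>k. (real k / real n - x) ^ 4) \<le> 2 * (x * (1 - x)) / sqrt (real n)"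
proof -
  have "sqrt (real n) \<le> real n"
    using assms(2) by (intro real_le_lsqrt) (auto simp: power2_eq_square)
  moreover have "0 \<le> real n * binomial_expectation x n (\<lambda>k. (real k / real n - x) ^ 4)"
    using assms(1) by (simp add: binomial_expectation_nonneg)
  ultimately have "sqrt (real n) * (real n * binomial_expectation x n (\<lambda>k. (real k / real n - x) ^ 4))
      \<le> real n * (real n * binomial_expectation x n (\<lambda>k. (real k / real n - x) ^ 4))"
    by (rule mult_right_mono)
  also have "\<dots> \<le> 2 * (x * (1 - x))"
    using binomial_expectation_deviation_power4_le[OF assms] by (simp add: power2_eq_square mult.assoc)
  finally show ?thesis
    using assms(2) by (simp add: pos_le_divide_eq mult.commute)
qed

lemma abs_power3_le_AM_GM:
  fixes y r :: real
  assumes "r > 0"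
  shows "\<bar>y\<bar> ^ 3 \<le> y ^ 2 / (2 * r) + r * y ^ 4 / 2"
proof -
  have "0 \<le> y ^ 2 * (1 - r * \<bar>y\<bar>) ^ 2" by simp
  also have "\<dots> = y ^ 2 - 2 * r * \<bar>y\<bar> ^ 3 + r ^ 2 * y ^ 4"
    by (simp add: power2_eq_square power3_eq_cube power4_eq_xxxx algebra_simps abs_mult_self_eq)
  finally show ?thesis
    using assms by (simp add: field_simps power2_eq_square)
qed

lemma binomial_expectation_deviation_abs_power3_bound:
  assumes "x \<in> {0..1}" and "n \<ge> 1"
  shows "real n * binomial_expectation x n (\<lambda>k. \<bar>real k / real n - x\<bar> ^ 3)
    \<le> 2 * (x * (1 - x)) / sqrt (real n)"
proof -
  define r where "r = sqrt (real n)"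
  define v where "v = x * (1 - x)"
  define E4 where "E4 = binomial_expectation x n (\<lambda>k. (real k / real n - x) ^ 4)"
  have r: "r > 0" "r ^ 2 = real n" unfolding r_def using assms(2) by auto
  have v: "v \<ge> 0" unfolding v_def using variance_factor_bounds[OF assms(1)] by simp
  have "r * (real n * E4) * r = real n ^ 2 * E4"
    unfolding r(2)[symmetric] by algebra
  also have "\<dots> \<le> 2 * v"
    using binomial_expectation_deviation_power4_le[OF assms] unfolding E4_def v_def .
  finally have "r * (real n * E4) * r \<le> 2 * v" .
  then have E4: "r * (real n * E4) \<le> 2 * v / r"
    using r(1) by (simp add: pos_le_divide_eq)
  have "binomial_expectation x n (\<lambda>k. \<bar>real k / real n - x\<bar> ^ 3)
      \<le> binomial_expectation x n (\<lambda>k. (real k / real n - x) ^ 2 / (2 * r) + r * (real k / real n - x) ^ 4 / 2)"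
    using abs_power3_le_AM_GM[OF r(1)] assms(1) by (intro binomial_expectation_mono) auto
  also have "\<dots> = v / real n / (2 * r) + r * E4 / 2"
    using binomial_expectation_deviation_power2[OF assms(2)] unfolding E4_def v_def by simp
  finally have "real n * binomial_expectation x n (\<lambda>k. \<bar>real k / real n - x\<bar> ^ 3)
      \<le> real n * (v / real n / (2 * r) + r * E4 / 2)"
    by (rule mult_left_mono) simp
  also have "\<dots> = v / (2 * r) + r * (real n * E4) / 2"
    using assms(2) by (simp add: field_simps)
  also have "\<dots> \<le> 2 * v / r"
    using E4 v r(1) by (simp add: field_simps)
  finally show ?thesis unfolding r_def v_def .
qed

lemma binomial_expectation_product_expansion:
  assumes "binomial_expectation x n Y = 0"
  shows "binomial_expectation x n (\<lambda>k. (f0 + a * Y k + R k) * (g0 + b * Y k + S k))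
      - binomial_expectation x n (\<lambda>k. f0 + a * Y k + R k) * binomial_expectation x n (\<lambda>k. g0 + b * Y k + S k)
      - a * b * binomial_expectation x n (\<lambda>k. Y k ^ 2)
    = a * binomial_expectation x n (\<lambda>k. Y k * S k) + b * binomial_expectation x n (\<lambda>k. Y k * R k)
      + binomial_expectation x n (\<lambda>k. R k * S k) - binomial_expectation x n R * binomial_expectation x n S"
proof -
  have "binomial_expectation x n (\<lambda>k. (f0 + a * Y k + R k) * (g0 + b * Y k + S k))
      = binomial_expectation x n (\<lambda>k. f0 * g0 + (f0 * b + a * g0) * Y k + f0 * S k + g0 * R k
          + a * b * Y k ^ 2 + a * (Y k * S k) + b * (Y k * R k) + R k * S k)"
    by (rule arg_cong[where f = "binomial_expectation x n"]) (simp add: fun_eq_iff algebra_simps power2_eq_square)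
  then show ?thesis
    unfolding binomial_expectation_linear assms
    by algebra
qed

lemma abs_mult_le_abs_power3:
  fixes y s K :: real
  assumes "\<bar>s\<bar> \<le> K * y ^ 2"
  shows "\<bar>y * s\<bar> \<le> K * \<bar>y\<bar> ^ 3"
proof -
  have "\<bar>y * s\<bar> \<le> \<bar>y\<bar> * (K * y ^ 2)"
    unfolding abs_mult using assms by (rule mult_left_mono) simp
  also have "\<dots> = K * \<bar>y\<bar> ^ 3"
    by (simp add: power2_eq_square power3_eq_cube abs_mult_self_eq)
  finally show ?thesis .
qed

lemma binomial_expectation_quadratic_remainder:
  assumes x: "x \<in> {0..1}" and n: "n \<ge> 1"
    and R: "\<And>k. k \<le> n \<Longrightarrow> \<bar>R k\<bar> \<le> K * (real k / real n - x) ^ 2"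
  shows "\<bar>binomial_expectation x n R\<bar> \<le> K * (x * (1 - x) / real n)"
proof -
  have "\<bar>binomial_expectation x n R\<bar> \<le> binomial_expectation x n (\<lambda>k. K * (real k / real n - x) ^ 2)"
    using binomial_expectation_abs_le[OF x R] .
  then show ?thesis
    using binomial_expectation_deviation_power2[OF n] by simp
qed

lemma binomial_expectation_deviation_mult_remainder:
  assumes x: "x \<in> {0..1}" and n: "n \<ge> 1" and K: "K \<ge> 0"
    and R: "\<And>k. k \<le> n \<Longrightarrow> \<bar>R k\<bar> \<le> K * (real k / real n - x) ^ 2"
  shows "real n * \<bar>binomial_expectation x n (\<lambda>k. (real k / real n - x) * R k)\<bar>
    \<le> 2 * K * (x * (1 - x)) / sqrt (real n)"
proof -
  have "\<bar>binomial_expectation x n (\<lambda>k. (real k / real n - x) * R k)\<bar>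
      \<le> K * binomial_expectation x n (\<lambda>k. \<bar>real k / real n - x\<bar> ^ 3)"
    using binomial_expectation_abs_le[OF x abs_mult_le_abs_power3[OF R]] by simp
  then have "real n * \<bar>binomial_expectation x n (\<lambda>k. (real k / real n - x) * R k)\<bar>
      \<le> real n * (K * binomial_expectation x n (\<lambda>k. \<bar>real k / real n - x\<bar> ^ 3))"
    by (rule mult_left_mono) simp
  also have "\<dots> = K * (real n * binomial_expectation x n (\<lambda>k. \<bar>real k / real n - x\<bar> ^ 3))"
    by (rule mult.left_commute)
  also have "\<dots> \<le> K * (2 * (x * (1 - x)) / sqrt (real n))"
    using binomial_expectation_deviation_abs_power3_bound[OF x n] K by (rule mult_left_mono)
  finally show ?thesis by (simp add: mult_ac)
qed

lemma binomial_expectation_remainder_mult_remainder: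
  assumes x: "x \<in> {0..1}" and n: "n \<ge> 1" and K: "Kf \<ge> 0" "Kg \<ge> 0"
    and R: "\<And>k. k \<le> n \<Longrightarrow> \<bar>R k\<bar> \<le> Kf * (real k / real n - x) ^ 2"
    and S: "\<And>k. k \<le> n \<Longrightarrow> \<bar>S k\<bar> \<le> Kg * (real k / real n - x) ^ 2"
  shows "real n * \<bar>binomial_expectation x n (\<lambda>k. R k * S k)\<bar>
    \<le> 2 * Kf * Kg * (x * (1 - x)) / sqrt (real n)"
proof -
  have RS: "\<bar>R k * S k\<bar> \<le> (Kf * Kg) * (real k / real n - x) ^ 4" if "k \<le> n" for k
  proof -
    have "\<bar>R k * S k\<bar> \<le> (Kf * (real k / real n - x) ^ 2) * (Kg * (real k / real n - x) ^ 2)"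
      unfolding abs_mult using R[OF that] S[OF that] K by (intro mult_mono) auto
    then show ?thesis by (simp add: power2_eq_square power4_eq_xxxx mult_ac)
  qed
  have "\<bar>binomial_expectation x n (\<lambda>k. R k * S k)\<bar>
      \<le> Kf * Kg * binomial_expectation x n (\<lambda>k. (real k / real n - x) ^ 4)"
    using binomial_expectation_abs_le[OF x RS] by simp
  then have "real n * \<bar>binomial_expectation x n (\<lambda>k. R k * S k)\<bar>
      \<le> real n * (Kf * Kg * binomial_expectation x n (\<lambda>k. (real k / real n - x) ^ 4))"
    by (rule mult_left_mono) simp
  also have "\<dots> = Kf * Kg * (real n * binomial_expectation x n (\<lambda>k. (real k / real n - x) ^ 4))"
    by (rule mult.left_commute)
  also have "\<dots> \<le> Kf * Kg * (2 * (x * (1 - x)) / sqrt (real n))"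
    using binomial_expectation_deviation_power4_bound[OF x n] K by (intro mult_left_mono) auto
  finally show ?thesis by (simp add: mult_ac)
qed

lemma binomial_expectation_remainders_product:
  assumes x: "x \<in> {0..1}" and n: "n \<ge> 1" and K: "Kf \<ge> 0" "Kg \<ge> 0"
    and R: "\<And>k. k \<le> n \<Longrightarrow> \<bar>R k\<bar> \<le> Kf * (real k / real n - x) ^ 2"
    and S: "\<And>k. k \<le> n \<Longrightarrow> \<bar>S k\<bar> \<le> Kg * (real k / real n - x) ^ 2"
  shows "real n * \<bar>binomial_expectation x n R * binomial_expectation x n S\<bar>
    \<le> Kf * Kg * (x * (1 - x)) / sqrt (real n)"
proof -
  define v where "v = x * (1 - x)"
  have v: "0 \<le> v" "v \<le> 1"
    using variance_factor_bounds[OF x] unfolding v_def by auto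
  have "real n * \<bar>binomial_expectation x n R * binomial_expectation x n S\<bar>
      \<le> real n * ((Kf * (v / real n)) * (Kg * (v / real n)))"
    unfolding abs_mult v_def
    using binomial_expectation_quadratic_remainder[OF x n] R S K v
    by (intro mult_left_mono mult_mono) (auto simp: v_def)
  also have "\<dots> = Kf * Kg * (v * v / real n)"
    using n by (simp add: field_simps)
  also have "\<dots> \<le> Kf * Kg * (v / sqrt (real n))"
  proof (intro mult_left_mono)
    have "v * v \<le> v" "sqrt (real n) \<le> real n"
      using v n by (auto intro!: mult_left_le real_le_lsqrt simp: power2_eq_square)
    then show "v * v / real n \<le> v / sqrt (real n)"
      using n v by (intro frac_le) auto
  qed (use K in auto)
  finally show ?thesis
    unfolding v_def by simp
qed

lemma binomial_covariance_linearization_bound: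
  assumes x: "x \<in> {0..1}" and n: "n \<ge> 1" and K: "Kf \<ge> 0" "Kg \<ge> 0"
    and F: "\<And>k. k \<le> n \<Longrightarrow> \<bar>F k - f0 - a * (real k / real n - x)\<bar> \<le> Kf * (real k / real n - x) ^ 2"
    and G: "\<And>k. k \<le> n \<Longrightarrow> \<bar>G k - g0 - b * (real k / real n - x)\<bar> \<le> Kg * (real k / real n - x) ^ 2"
  shows "real n * \<bar>binomial_expectation x n (\<lambda>k. F k * G k)
      - binomial_expectation x n F * binomial_expectation x n G - x * (1 - x) / real n * a * b\<bar>
    \<le> (2 * \<bar>a\<bar> * Kg + 2 * \<bar>b\<bar> * Kf + 3 * Kf * Kg) * (x * (1 - x)) / sqrt (real n)"
proof -
  define Y where "Y k = real k / real n - x" for k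
  define R where "R k = F k - f0 - a * Y k" for k
  define S where "S k = G k - g0 - b * Y k" for k
  define E where "E = binomial_expectation x n"
  define v where "v = x * (1 - x)"
  have R: "\<bar>R k\<bar> \<le> Kf * (real k / real n - x) ^ 2" and S: "\<bar>S k\<bar> \<le> Kg * (real k / real n - x) ^ 2"
    if "k \<le> n" for k
    using F[OF that] G[OF that] unfolding R_def S_def Y_def by auto
  have "F = (\<lambda>k. f0 + a * Y k + R k)" "G = (\<lambda>k. g0 + b * Y k + S k)"
    by (simp_all add: R_def S_def fun_eq_iff)
  moreover have "x * (1 - x) / real n = E (\<lambda>k. Y k ^ 2)"
    unfolding E_def Y_def using binomial_expectation_deviation_power2[OF n] by simp
  moreover have "E Y = 0"
    unfolding E_def Y_def by (rule binomial_expectation_deviation[OF n])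
  ultimately have expansion: "E (\<lambda>k. F k * G k) - E F * E G - x * (1 - x) / real n * a * b
      = a * E (\<lambda>k. Y k * S k) + b * E (\<lambda>k. Y k * R k) + E (\<lambda>k. R k * S k) - E R * E S"
    using binomial_expectation_product_expansion[of x n Y, folded E_def] by (simp add: mult_ac)
  have "real n * \<bar>E (\<lambda>k. F k * G k) - E F * E G - x * (1 - x) / real n * a * b\<bar>
      \<le> \<bar>a\<bar> * (real n * \<bar>E (\<lambda>k. Y k * S k)\<bar>) + \<bar>b\<bar> * (real n * \<bar>E (\<lambda>k. Y k * R k)\<bar>)
        + real n * \<bar>E (\<lambda>k. R k * S k)\<bar> + real n * \<bar>E R * E S\<bar>"
  proof -
    have triangle: "\<bar>a * E (\<lambda>k. Y k * S k) + b * E (\<lambda>k. Y k * R k) + E (\<lambda>k. R k * S k) - E R * E S\<bar>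
        \<le> \<bar>a\<bar> * \<bar>E (\<lambda>k. Y k * S k)\<bar> + \<bar>b\<bar> * \<bar>E (\<lambda>k. Y k * R k)\<bar> + \<bar>E (\<lambda>k. R k * S k)\<bar> + \<bar>E R * E S\<bar>"
      unfolding abs_mult[symmetric] by arith
    show ?thesis
      unfolding expansion using mult_left_mono[OF triangle, of "real n"] by (simp add: algebra_simps)
  qed
  also have "\<dots> \<le> \<bar>a\<bar> * (2 * Kg * v / sqrt (real n)) + \<bar>b\<bar> * (2 * Kf * v / sqrt (real n))
        + 2 * Kf * Kg * v / sqrt (real n) + Kf * Kg * v / sqrt (real n)"
    unfolding E_def Y_def v_def
    using binomial_expectation_deviation_mult_remainder[OF x n K(2) S]
      binomial_expectation_deviation_mult_remainder[OF x n K(1) R]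
      binomial_expectation_remainder_mult_remainder[OF x n K R S]
      binomial_expectation_remainders_product[OF x n K R S]
    by (intro add_mono mult_left_mono) (auto simp: E_def v_def)
  also have "\<dots> = (2 * \<bar>a\<bar> * Kg + 2 * \<bar>b\<bar> * Kf + 3 * Kf * Kg) * v / sqrt (real n)"
    using n by (simp add: field_simps)
  finally show ?thesis
    unfolding E_def v_def .
qed

lemma increment_le_power_dist:
  fixes h h' :: "real \<Rightarrow> real"
  assumes S: "convex S" "s \<in> S" "t \<in> S"
    and deriv: "\<And>v. v \<in> S \<Longrightarrow> (h has_real_derivative h' v) (at v within S)"
    and bound: "\<And>v. v \<in> S \<Longrightarrow> \<bar>h' v\<bar> \<le> M * \<bar>v - t\<bar> ^ k"
  shows "\<bar>h s - h t\<bar> \<le> M * \<bar>s - t\<bar> ^ Suc k"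
proof (cases "s = t")
  case False
  have "0 \<le> M * \<bar>s - t\<bar> ^ k"
    using bound[OF S(2)] by linarith
  moreover have "0 < \<bar>s - t\<bar> ^ k"
    using False by simp
  ultimately have M: "0 \<le> M"
    by (simp add: zero_le_mult_iff)
  have segment: "closed_segment t s \<subseteq> S"
    using S by (simp add: closed_segment_subset)
  have "norm (h s - h t) \<le> (M * \<bar>s - t\<bar> ^ k) * norm (s - t)"
  proof (rule field_differentiable_bound[OF convex_closed_segment])
    fix v assume v: "v \<in> closed_segment t s"
    show "(h has_real_derivative h' v) (at v within closed_segment t s)"
      using deriv[of v] v segment by (blast intro: has_field_derivative_subset)
    have "\<bar>v - t\<bar> \<le> \<bar>s - t\<bar>"
      using dist_in_closed_segment[OF v] by (simp add: dist_real_def abs_minus_commute)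
    then have "M * \<bar>v - t\<bar> ^ k \<le> M * \<bar>s - t\<bar> ^ k"
      using M by (intro mult_left_mono power_mono) auto
    then show "norm (h' v) \<le> M * \<bar>s - t\<bar> ^ k"
      using bound[of v] v segment by auto
  qed auto
  then show ?thesis by (simp add: mult_ac)
qed simp

lemma C3_01_taylor_remainder:
  assumes C: "C3_01 f f1 f2 f3" and M: "\<And>u. u \<in> {0..1} \<Longrightarrow> \<bar>f3 u\<bar> \<le> M"
    and s: "s \<in> {0..1}" and t: "t \<in> {0..1}"
  shows "\<bar>f s - f t - f1 t * (s - t) - f2 t * (s - t) ^ 2 / 2\<bar> \<le> M * \<bar>s - t\<bar> ^ 3"
proof -
  have D0: "(f has_real_derivative f1 u) (at u within {0..1})"
    and D1: "(f1 has_real_derivative f2 u) (at u within {0..1})"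
    and D2: "(f2 has_real_derivative f3 u) (at u within {0..1})" if "u \<in> {0..1}" for u
    using C that unfolding C3_01_def by auto
  have I: "convex {0..1::real}" by (rule convex_real_interval)
  have step0: "\<bar>f2 u - f2 t\<bar> \<le> M * \<bar>u - t\<bar>" if u: "u \<in> {0..1}" for u
    using increment_le_power_dist[OF I u t D2, of M 0] M by simp
  have step1: "\<bar>f1 u - f1 t - f2 t * (u - t)\<bar> \<le> M * \<bar>u - t\<bar> ^ 2" if u: "u \<in> {0..1}" for u
  proof -
    have "\<bar>(f1 u - f2 t * u) - (f1 t - f2 t * t)\<bar> \<le> M * \<bar>u - t\<bar> ^ Suc 1"
    proof (rule increment_le_power_dist[OF I u t])
      fix v assume v: "v \<in> {0..1::real}"
      show "((\<lambda>v. f1 v - f2 t * v) has_real_derivative f2 v - f2 t) (at v within {0..1})"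
        using D1[OF v] by (auto intro!: derivative_eq_intros)
      show "\<bar>f2 v - f2 t\<bar> \<le> M * \<bar>v - t\<bar> ^ 1"
        using step0[OF v] by simp
    qed
    moreover have "(f1 u - f2 t * u) - (f1 t - f2 t * t) = f1 u - f1 t - f2 t * (u - t)"
      by (simp add: algebra_simps)
    ultimately show ?thesis by (simp only: Suc_1)
  qed
  have "\<bar>(f s - f1 t * s - f2 t * (s - t) ^ 2 / 2) - (f t - f1 t * t - f2 t * (t - t) ^ 2 / 2)\<bar>
      \<le> M * \<bar>s - t\<bar> ^ Suc 2"
  proof (rule increment_le_power_dist[OF I s t])
    fix v assume v: "v \<in> {0..1::real}"
    show "((\<lambda>v. f v - f1 t * v - f2 t * (v - t) ^ 2 / 2) has_real_derivative f1 v - f1 t - f2 t * (v - t))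
        (at v within {0..1})"
      using D0[OF v] by (auto intro!: derivative_eq_intros simp: field_simps)
    show "\<bar>f1 v - f1 t - f2 t * (v - t)\<bar> \<le> M * \<bar>v - t\<bar> ^ 2"
      using step1[OF v] .
  qed
  moreover have "(f s - f1 t * s - f2 t * (s - t) ^ 2 / 2) - (f t - f1 t * t - f2 t * (t - t) ^ 2 / 2)
      = f s - f t - f1 t * (s - t) - f2 t * (s - t) ^ 2 / 2"
    by (simp add: algebra_simps)
  ultimately show ?thesis by (simp only: Suc_numeral semiring_norm)
qed

lemma C3_01_derivative_bounds:
  assumes C: "C3_01 f f1 f2 f3" and t: "t \<in> {0..1}"
    and M0: "\<And>u. u \<in> {0..1} \<Longrightarrow> \<bar>f u\<bar> \<le> M"
    and M3: "\<And>u. u \<in> {0..1} \<Longrightarrow> \<bar>f3 u\<bar> \<le> M"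
  shows "\<bar>f1 t\<bar> \<le> 17 * M" "\<bar>f2 t\<bar> \<le> 67 * M"
proof -
  obtain h :: real where h: "\<bar>h\<bar> = 1 / 4" "t + h \<in> {0..1}" "t + 2 * h \<in> {0..1}"
    using t by (cases "t \<le> 1 / 2") (auto intro: that[of "1 / 4"] that[of "- 1 / 4"])
  have "h ^ 2 = \<bar>h\<bar> ^ 2" by simp
  also have "\<dots> = 1 / 16" unfolding h(1) by (simp add: power2_eq_square)
  finally have h2: "h ^ 2 = 1 / 16" .
  have "\<bar>f (t + h) - f t - f1 t * h - f2 t * h ^ 2 / 2\<bar> \<le> M * \<bar>h\<bar> ^ 3"
    using C3_01_taylor_remainder[OF C M3 h(2) t] by simp
  then have E1: "\<bar>f (t + h) - f t - f1 t * h - f2 t / 32\<bar> \<le> M / 64"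
    using h(1) h2 by (simp add: power3_eq_cube)
  have "\<bar>f (t + 2 * h) - f t - f1 t * (2 * h) - f2 t * (2 * h) ^ 2 / 2\<bar> \<le> M * \<bar>2 * h\<bar> ^ 3"
    using C3_01_taylor_remainder[OF C M3 h(3) t] by simp
  then have E2: "\<bar>f (t + 2 * h) - f t - f1 t * (2 * h) - f2 t / 8\<bar> \<le> M / 8"
    using h(1) h2 by (simp add: power_mult_distrib abs_mult power3_eq_cube)
  \<comment> \<open>\<open>E2 - 2 E1\<close> eliminates \<open>f1 t\<close>, and \<open>4 E1 - E2\<close> eliminates \<open>f2 t\<close>.\<close>
  have F: "\<bar>f t\<bar> \<le> M" "\<bar>f (t + h)\<bar> \<le> M" "\<bar>f (t + 2 * h)\<bar> \<le> M"
    using M0 t h by auto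
  show "\<bar>f2 t\<bar> \<le> 67 * M"
    using E1 E2 F unfolding abs_le_iff by linarith
  have "\<bar>f1 t * h\<bar> \<le> 17 / 4 * M"
    using E1 E2 F unfolding abs_le_iff by linarith
  then show "\<bar>f1 t\<bar> \<le> 17 * M"
    using h(1) by (simp add: abs_mult)
qed

lemma C3_01_linearization:
  assumes C: "C3_01 f f1 f2 f3" and s: "s \<in> {0..1}" and t: "t \<in> {0..1}"
    and M0: "\<And>u. u \<in> {0..1} \<Longrightarrow> \<bar>f u\<bar> \<le> M"
    and M3: "\<And>u. u \<in> {0..1} \<Longrightarrow> \<bar>f3 u\<bar> \<le> M"
  shows "\<bar>f s - f t - f1 t * (s - t)\<bar> \<le> 35 * M * (s - t) ^ 2"
proof -
  have M: "0 \<le> M"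
    using M0[OF t] by linarith
  have "\<bar>s - t\<bar> ^ 3 = (s - t) ^ 2 * \<bar>s - t\<bar>"
    by (simp add: power3_eq_cube power2_eq_square abs_mult_self_eq)
  also have "\<dots> \<le> (s - t) ^ 2 * 1"
    using s t by (intro mult_left_mono) auto
  finally have "M * \<bar>s - t\<bar> ^ 3 \<le> M * (s - t) ^ 2"
    using M by (intro mult_left_mono) auto
  moreover have "\<bar>f2 t * (s - t) ^ 2 / 2\<bar> \<le> 67 * M * (s - t) ^ 2 / 2"
    using C3_01_derivative_bounds(2)[OF C t M0 M3] by (simp add: abs_mult divide_right_mono mult_right_mono)
  ultimately show ?thesis
    using C3_01_taylor_remainder[OF C M3 s t] unfolding abs_le_iff by linarith
qed

lemma abs_le_sup_norm01:
  assumes "continuous_on {0..1} f" and "u \<in> {0..1}"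
  shows "\<bar>f u\<bar> \<le> sup_norm01 f"
proof -
  have "compact ((\<lambda>t. \<bar>f t\<bar>) ` {0..1})"
    using assms(1) by (intro compact_continuous_image continuous_intros) auto
  then have "bdd_above ((\<lambda>t. \<bar>f t\<bar>) ` {0..1})"
    by (intro bounded_imp_bdd_above compact_imp_bounded)
  then show ?thesis
    unfolding sup_norm01_def using assms(2) by (rule cSUP_upper2) simp
qed

lemma C3_01_abs_le_max_sup_norm01:
  assumes C: "C3_01 f f1 f2 f3" and u: "u \<in> {0..1}"
  shows "\<bar>f u\<bar> \<le> max (sup_norm01 f) (sup_norm01 f3)" "\<bar>f3 u\<bar> \<le> max (sup_norm01 f) (sup_norm01 f3)"
proof -
  have "continuous_on {0..1} f"
    using C unfolding C3_01_def continuous_on_eq_continuous_within by (auto intro: DERIV_continuous)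
  moreover have "continuous_on {0..1} f3"
    using C unfolding C3_01_def by simp
  ultimately show "\<bar>f u\<bar> \<le> max (sup_norm01 f) (sup_norm01 f3)" "\<bar>f3 u\<bar> \<le> max (sup_norm01 f) (sup_norm01 f3)"
    using abs_le_sup_norm01 u by (auto intro: max.coboundedI1 max.coboundedI2)
qed

lemma bernstein_covariance_estimate:
  assumes Cf: "C3_01 f f1 f2 f3" and Cg: "C3_01 g g1 g2 g3" and x: "x \<in> {0..1}" and n: "n \<ge> 1"
  defines "Mf \<equiv> max (sup_norm01 f) (sup_norm01 f3)" and "Mg \<equiv> max (sup_norm01 g) (sup_norm01 g3)"
  shows "real n * \<bar>bernstein n (\<lambda>t. f t * g t) x - bernstein n f x * bernstein n g x
      - x * (1 - x) / real n * f1 x * g1 x\<bar> \<le> 6055 * x * (1 - x) * (1 / sqrt (real n)) * Mf * Mg"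
proof -
  note bound_f = C3_01_abs_le_max_sup_norm01[OF Cf, folded Mf_def]
  note bound_g = C3_01_abs_le_max_sup_norm01[OF Cg, folded Mg_def]
  have M: "0 \<le> Mf" "0 \<le> Mg"
    using bound_f(1)[OF x] bound_g(1)[OF x] by linarith+
  have a: "\<bar>f1 x\<bar> \<le> 17 * Mf" and b: "\<bar>g1 x\<bar> \<le> 17 * Mg"
    using C3_01_derivative_bounds(1)[OF Cf x bound_f] C3_01_derivative_bounds(1)[OF Cg x bound_g] by auto
  have "real n * \<bar>bernstein n (\<lambda>t. f t * g t) x - bernstein n f x * bernstein n g x
      - x * (1 - x) / real n * f1 x * g1 x\<bar>
    \<le> (2 * \<bar>f1 x\<bar> * (35 * Mg) + 2 * \<bar>g1 x\<bar> * (35 * Mf) + 3 * (35 * Mf) * (35 * Mg))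
      * (x * (1 - x)) / sqrt (real n)"
    unfolding bernstein_eq_binomial_expectation
  proof (rule binomial_covariance_linearization_bound[OF x n])
    fix k assume "k \<le> n"
    then have k: "real k / real n \<in> {0..1}" using n by (simp add: divide_le_eq_1)
    show "\<bar>f (real k / real n) - f x - f1 x * (real k / real n - x)\<bar> \<le> 35 * Mf * (real k / real n - x) ^ 2"
      using C3_01_linearization[OF Cf k x bound_f] .
    show "\<bar>g (real k / real n) - g x - g1 x * (real k / real n - x)\<bar> \<le> 35 * Mg * (real k / real n - x) ^ 2"
      using C3_01_linearization[OF Cg k x bound_g] .
  qed (use M in auto)
  also have "\<dots> \<le> (6055 * Mf * Mg) * (x * (1 - x)) / sqrt (real n)"
  proof -
    have "\<bar>f1 x\<bar> * Mg \<le> 17 * Mf * Mg" "\<bar>g1 x\<bar> * Mf \<le> 17 * Mg * Mf"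
      using a b M by (auto intro: mult_right_mono)
    then have "2 * \<bar>f1 x\<bar> * (35 * Mg) + 2 * \<bar>g1 x\<bar> * (35 * Mf) + 3 * (35 * Mf) * (35 * Mg) \<le> 6055 * Mf * Mg"
      by (simp add: algebra_simps)
    then show ?thesis
      using variance_factor_bounds(1)[OF x] by (intro divide_right_mono mult_right_mono) auto
  qed
  finally show ?thesis
    by (simp add: mult_ac)
qed

theorem corollary2p3:
  shows "\<exists>C>0. \<forall>(f::real\<Rightarrow>real) f1 f2 f3 (g::real\<Rightarrow>real) g1 g2 g3 (x::real) (n::nat).
     C3_01 f f1 f2 f3 \<longrightarrow> C3_01 g g1 g2 g3 \<longrightarrow> x \<in> {0..1} \<longrightarrow> n \<ge> 1 \<longrightarrow>
     real n * \<bar>bernstein n (\<lambda>t. f t * g t) x - bernstein n f x * bernstein n g x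
                 - x * (1 - x) / real n * f1 x * g1 x\<bar>
       \<le> C * x * (1 - x) * (1 / sqrt (real n))
           * max (sup_norm01 f) (sup_norm01 f3) * max (sup_norm01 g) (sup_norm01 g3)"
  using bernstein_covariance_estimate by (intro exI[of _ 6055]) auto

end
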